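(* Let $P$ be any product rule with $P$-product $*$. Then $\overline{f*g}=\overline f*\overline g$ holds for all series $f,g$ if and only if for all series $f,g$ and all $b\in\Sigma$, \[\delta^R_b(f*g)=[\![P]\!]_{[x\mapsto f,\ \dot x\mapsto\delta^R_bf,\ y\mapsto g,\ \dot y\mapsto\delta^R_bg]}.\]
   Context: Let $\Sigma$ be a finite alphabet, $\Sigma^*$ the finite words with empty word $\varepsilon$. A series is $f:\Sigma^*\to\mathbb Q$, $f_w=f(w)$; series form a $\mathbb Q$-vector space under pointwise operations. For $a\in\Sigma$ the left derivative $\delta_af$ is $w\mapsto f(aw)$ and the right derivative $\delta^R_af$ is $w\mapsto f(wa)$. The reversal $\overline f$ of $f$ is $w\mapsto f(\overline w)$, where $\overline w$ is the mirror image of $w$. Terms over $X$: generated by $u,v::=x\mid 0\mid c\cdot u\mid u+v\mid u*v$. A product rule is a term $P$ over $\{x,\dot x,y,\dot y\}$. The $P$-product $*$ and semantics $[\![u]\!]_\varrho$ of terms under valuations $\varrho:X\to$ series are the unique pair with $(f*g)_\varepsilon=f_\varepsilon g_\varepsilon$, $\delta_a(f*g)=[\![P]\!]_{[x\mapsto f,\dot x\mapsto\delta_af,y\mapsto g,\dot y\mapsto\delta_ag]}$, and $[\![\cdot]\!]_\varrho$ interpreting variables via $\varrho$ and constructors by zero, scalar multiplication, addition, $*$. *)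

theory Defs
  imports Main "HOL.Rat"
begin

type_synonym 'a series = "'a list \<Rightarrow> rat"

datatype 'v trm = Var 'v | Zero | Scal rat "'v trm" | Plus "'v trm" "'v trm" | Times "'v trm" "'v trm"

datatype pvar = X | Xd | Y | Yd

fun sem :: "('a series \<Rightarrow> 'a series \<Rightarrow> 'a series) \<Rightarrow> ('v \<Rightarrow> 'a series) \<Rightarrow> 'v trm \<Rightarrow> 'a series" where
  "sem m \<rho> (Var v) = \<rho> v"
| "sem m \<rho> Zero = (\<lambda>w. 0)"
| "sem m \<rho> (Scal c u) = (\<lambda>w. c * sem m \<rho> u w)"
| "sem m \<rho> (Plus u v) = (\<lambda>w. sem m \<rho> u w + sem m \<rho> v w)"
| "sem m \<rho> (Times u v) = m (sem m \<rho> u) (sem m \<rho> v)"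

definition ldiv :: "'a \<Rightarrow> 'a series \<Rightarrow> 'a series" where
  "ldiv a f = (\<lambda>w. f (a # w))"

definition rdiv :: "'a \<Rightarrow> 'a series \<Rightarrow> 'a series" where
  "rdiv a f = (\<lambda>w. f (w @ [a]))"

definition srev :: "'a series \<Rightarrow> 'a series" where
  "srev f = (\<lambda>w. f (rev w))"

definition pval :: "'a series \<Rightarrow> 'a series \<Rightarrow> 'a series \<Rightarrow> 'a series \<Rightarrow> pvar \<Rightarrow> 'a series" where
  "pval f f' g g' = (\<lambda>v. case v of X \<Rightarrow> f | Xd \<Rightarrow> f' | Y \<Rightarrow> g | Yd \<Rightarrow> g')"

definition is_Pprod :: "pvar trm \<Rightarrow> ('a series \<Rightarrow> 'a series \<Rightarrow> 'a series) \<Rightarrow> bool" where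
  "is_Pprod P m \<longleftrightarrow> (\<forall>f g. m f g [] = f [] * g []) \<and>
     (\<forall>a f g. ldiv a (m f g) = sem m (pval f (ldiv a f) g (ldiv a g)) P)"

definition Pprod :: "pvar trm \<Rightarrow> 'a series \<Rightarrow> 'a series \<Rightarrow> 'a series" where
  "Pprod P = (THE m. is_Pprod P m)"

end

theory Submission
  imports Defs
begin

text \<open>
  The P-product is the unique fixpoint of one unfolding step of its defining equations: the step
  determines a product on words of length \<open>n + 1\<close> from its values on words of length \<open>n\<close>.
  Conjugating a product by reversal, \<open>(f, g) \<mapsto> rev (m (rev f) (rev g))\<close>, swaps left and
  right derivatives. Hence the conjugate of the P-product satisfies the defining equations of the
  P-product exactly when the P-product obeys the right-derivative rule, and by uniqueness the
  conjugate equals the P-product exactly when the P-product commutes with reversal.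
\<close>

definition agree_upto :: "nat \<Rightarrow> 'a series \<Rightarrow> 'a series \<Rightarrow> bool" where
  "agree_upto n f g \<longleftrightarrow> (\<forall>w. length w \<le> n \<longrightarrow> f w = g w)"

definition prod_agree_upto ::
  "nat \<Rightarrow> ('a series \<Rightarrow> 'a series \<Rightarrow> 'a series) \<Rightarrow> ('a series \<Rightarrow> 'a series \<Rightarrow> 'a series) \<Rightarrow> bool" where
  "prod_agree_upto n m1 m2 \<longleftrightarrow>
     (\<forall>f g f' g'. agree_upto n f f' \<longrightarrow> agree_upto n g g' \<longrightarrow> agree_upto n (m1 f g) (m2 f' g'))"

lemma agree_uptoD: "agree_upto n f g \<Longrightarrow> length w \<le> n \<Longrightarrow> f w = g w"
  by (simp add: agree_upto_def)

lemma prod_agree_uptoD: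
  "prod_agree_upto n m1 m2 \<Longrightarrow> agree_upto n f f' \<Longrightarrow> agree_upto n g g' \<Longrightarrow>
   agree_upto n (m1 f g) (m2 f' g')"
  by (simp add: prod_agree_upto_def)

lemma sem_agree_upto:
  assumes "prod_agree_upto n m1 m2" and "\<And>v. agree_upto n (\<rho>1 v) (\<rho>2 v)"
  shows "agree_upto n (sem m1 \<rho>1 u) (sem m2 \<rho>2 u)"
  using assms by (induction u) (auto simp: agree_upto_def prod_agree_upto_def)

lemma agree_upto_pval_ldiv:
  assumes "agree_upto (Suc n) f f'" and "agree_upto (Suc n) g g'"
  shows "agree_upto n (pval f (ldiv a f) g (ldiv a g) v) (pval f' (ldiv a f') g' (ldiv a g') v)"
  using assms by (cases v) (auto simp: agree_upto_def pval_def ldiv_def)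

definition Pprod_step ::
  "pvar trm \<Rightarrow> ('a series \<Rightarrow> 'a series \<Rightarrow> 'a series) \<Rightarrow> 'a series \<Rightarrow> 'a series \<Rightarrow> 'a series" where
  "Pprod_step P m f g w = (case w of
       [] \<Rightarrow> f [] * g []
     | a # w' \<Rightarrow> sem m (pval f (ldiv a f) g (ldiv a g)) P w')"

lemma is_Pprod_iff_fixpoint: "is_Pprod P m \<longleftrightarrow> Pprod_step P m = m"
proof
  assume "is_Pprod P m"
  then show "Pprod_step P m = m"
    by (intro ext) (auto simp: is_Pprod_def Pprod_step_def ldiv_def fun_eq_iff split: list.split)
next
  assume fixpoint: "Pprod_step P m = m"
  have "m f g [] = f [] * g []" for f g
    by (subst fixpoint[symmetric]) (simp add: Pprod_step_def)
  moreover have "ldiv a (m f g) = sem m (pval f (ldiv a f) g (ldiv a g)) P" for a f g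
    by (subst fixpoint[symmetric]) (simp add: Pprod_step_def ldiv_def)
  ultimately show "is_Pprod P m"
    by (simp add: is_Pprod_def)
qed

lemma Pprod_step_Nil: "Pprod_step P m f g [] = f [] * g []"
  by (simp add: Pprod_step_def)

lemma Pprod_step_Cons: "Pprod_step P m f g (a # w) = sem m (pval f (ldiv a f) g (ldiv a g)) P w"
  by (simp add: Pprod_step_def)

lemma prod_agree_upto_0_Pprod_step: "prod_agree_upto 0 (Pprod_step P m1) (Pprod_step P m2)"
  by (auto simp: prod_agree_upto_def agree_upto_def Pprod_step_def)

lemma prod_agree_upto_Suc_Pprod_step:
  assumes "prod_agree_upto n m1 m2"
  shows "prod_agree_upto (Suc n) (Pprod_step P m1) (Pprod_step P m2)"
  unfolding prod_agree_upto_def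
proof (intro allI impI)
  fix f g f' g' :: "'a series"
  assume f: "agree_upto (Suc n) f f'" and g: "agree_upto (Suc n) g g'"
  have "agree_upto n (sem m1 (pval f (ldiv a f) g (ldiv a g)) P)
                     (sem m2 (pval f' (ldiv a f') g' (ldiv a g')) P)" for a
    by (rule sem_agree_upto[OF assms agree_upto_pval_ldiv[OF f g]])
  with f g show "agree_upto (Suc n) (Pprod_step P m1 f g) (Pprod_step P m2 f' g')"
    by (auto simp: agree_upto_def Pprod_step_def split: list.split)
qed

lemma prod_agree_upto_Pprod_step_iterate:
  "prod_agree_upto n ((Pprod_step P ^^ Suc n) m1) ((Pprod_step P ^^ Suc n) m2)"
proof (induction n)
  case 0
  show ?case by (simp add: prod_agree_upto_0_Pprod_step)
next
  case (Suc n)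
  then show ?case by (simp only: funpow.simps comp_apply prod_agree_upto_Suc_Pprod_step)
qed

lemma is_Pprod_unique:
  assumes "is_Pprod P m1" and "is_Pprod P m2"
  shows "m1 = m2"
proof (intro ext)
  fix f g :: "'a series" and w :: "'a list"
  have "(Pprod_step P ^^ k) m = m" if "is_Pprod P m" for k m
    using that by (induction k) (simp_all add: is_Pprod_iff_fixpoint)
  then have "prod_agree_upto (length w) m1 m2"
    using prod_agree_upto_Pprod_step_iterate[of "length w" P m1 m2] assms by metis
  then show "m1 f g w = m2 f g w"
    by (auto simp: prod_agree_upto_def agree_upto_def)
qed

text \<open>The value on words of length \<open>n\<close> is already fixed after \<open>n + 1\<close> steps from any start.\<close>

definition Pprod_limit :: "pvar trm \<Rightarrow> 'a series \<Rightarrow> 'a series \<Rightarrow> 'a series" where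
  "Pprod_limit P f g w = (Pprod_step P ^^ Suc (length w)) (\<lambda>f g w. 0) f g w"

lemma prod_agree_upto_Pprod_limit:
  "prod_agree_upto n ((Pprod_step P ^^ Suc n) (\<lambda>f g w. 0)) (Pprod_limit P)"
  unfolding prod_agree_upto_def
proof (intro allI impI)
  fix f g f' g' :: "'a series"
  assume f: "agree_upto n f f'" and g: "agree_upto n g g'"
  show "agree_upto n ((Pprod_step P ^^ Suc n) (\<lambda>f g w. 0) f g) (Pprod_limit P f' g')"
    unfolding agree_upto_def
  proof (intro allI impI)
    fix w :: "'a list"
    assume "length w \<le> n"
    then obtain k where n: "n = length w + k"
      using le_Suc_ex by blast
    have split: "(Pprod_step P ^^ Suc n) (\<lambda>f g w. 0)
        = (Pprod_step P ^^ Suc (length w)) ((Pprod_step P ^^ k) (\<lambda>f g w. 0))"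
      by (simp only: n add_Suc[symmetric] funpow_add comp_apply)
    have "agree_upto (length w) f f'" "agree_upto (length w) g g'"
      using f g n by (auto simp: agree_upto_def)
    then have "agree_upto (length w)
        ((Pprod_step P ^^ Suc (length w)) ((Pprod_step P ^^ k) (\<lambda>f g w. 0)) f g)
        ((Pprod_step P ^^ Suc (length w)) (\<lambda>f g w. 0) f' g')"
      by (rule prod_agree_uptoD[OF prod_agree_upto_Pprod_step_iterate])
    from agree_uptoD[OF this order_refl]
    show "(Pprod_step P ^^ Suc n) (\<lambda>f g w. 0) f g w = Pprod_limit P f' g' w"
      by (simp only: split Pprod_limit_def)
  qed
qed

lemma is_Pprod_Pprod_limit: "is_Pprod P (Pprod_limit P)"
  unfolding is_Pprod_iff_fixpoint
proof (intro ext)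
  fix f g :: "'a series" and w :: "'a list"
  show "Pprod_step P (Pprod_limit P) f g w = Pprod_limit P f g w"
  proof (cases w)
    case Nil
    then show ?thesis by (simp add: Pprod_step_Nil Pprod_limit_def)
  next
    case (Cons a w')
    let ?\<rho> = "pval f (ldiv a f) g (ldiv a g)"
    have agree: "agree_upto (length w')
        (sem ((Pprod_step P ^^ Suc (length w')) (\<lambda>f g w. 0)) ?\<rho> P) (sem (Pprod_limit P) ?\<rho> P)"
      by (rule sem_agree_upto[OF prod_agree_upto_Pprod_limit]) (simp add: agree_upto_def)
    have limit: "Pprod_limit P f g (a # w')
        = sem ((Pprod_step P ^^ Suc (length w')) (\<lambda>f g w. 0)) ?\<rho> P w'"
      unfolding Pprod_limit_def length_Cons funpow.simps(2)[where n = "Suc (length w')"] comp_apply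
      by (rule Pprod_step_Cons)
    show ?thesis
      unfolding Cons Pprod_step_Cons limit by (rule agree_uptoD[OF agree order_refl, symmetric])
  qed
qed

lemma is_Pprod_Pprod: "is_Pprod P (Pprod P)"
  unfolding Pprod_def
  by (rule theI[of "is_Pprod P", OF is_Pprod_Pprod_limit is_Pprod_unique[OF _ is_Pprod_Pprod_limit]])

lemma Pprod_Nil: "Pprod P f g [] = f [] * g []"
  using is_Pprod_Pprod[unfolded is_Pprod_def] by blast

lemma Pprod_eqI: "is_Pprod P m \<Longrightarrow> Pprod P = m"
  by (rule is_Pprod_unique[OF is_Pprod_Pprod])

definition mirror_prod ::
  "('a series \<Rightarrow> 'a series \<Rightarrow> 'a series) \<Rightarrow> 'a series \<Rightarrow> 'a series \<Rightarrow> 'a series" where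
  "mirror_prod m f g = srev (m (srev f) (srev g))"

lemma srev_srev [simp]: "srev (srev f) = f"
  by (simp add: srev_def)

lemma srev_inject: "srev f = srev g \<longleftrightarrow> f = g"
  by (metis srev_srev)

lemma ldiv_srev: "ldiv a (srev f) = srev (rdiv a f)"
  by (simp add: srev_def ldiv_def rdiv_def)

lemma srev_pval: "(\<lambda>v. srev (pval f f' g g' v)) = pval (srev f) (srev f') (srev g) (srev g')"
  unfolding fun_eq_iff by (simp add: pval_def split: pvar.split)

lemma mirror_prod_eq_iff: "mirror_prod m = m \<longleftrightarrow> (\<forall>f g. srev (m f g) = m (srev f) (srev g))"
proof
  assume mirror: "mirror_prod m = m"
  show "\<forall>f g. srev (m f g) = m (srev f) (srev g)"
  proof (intro allI)
    fix f g :: "'a series"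
    have "m (srev f) (srev g) = mirror_prod m (srev f) (srev g)"
      by (simp only: mirror)
    then show "srev (m f g) = m (srev f) (srev g)"
      by (simp add: mirror_prod_def)
  qed
next
  assume "\<forall>f g. srev (m f g) = m (srev f) (srev g)"
  then show "mirror_prod m = m"
    by (intro ext) (simp add: mirror_prod_def)
qed

lemma sem_mirror_prod: "sem (mirror_prod m) (\<lambda>v. srev (\<rho> v)) u = srev (sem m \<rho> u)"
  by (induction u) (simp_all add: srev_def mirror_prod_def)

lemma is_Pprod_mirror_prod_iff:
  "is_Pprod P (mirror_prod m) \<longleftrightarrow>
     (\<forall>f g. m f g [] = f [] * g []) \<and>
     (\<forall>f g b. rdiv b (m f g) = sem m (pval f (rdiv b f) g (rdiv b g)) P)"
proof -
  have "mirror_prod m (srev f) (srev g) [] = srev f [] * srev g [] \<longleftrightarrow> m f g [] = f [] * g []"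
    for f g
    by (simp add: mirror_prod_def srev_def)
  then have "(\<forall>f g. mirror_prod m f g [] = f [] * g []) \<longleftrightarrow> (\<forall>f g. m f g [] = f [] * g [])"
    by (metis srev_srev)
  moreover have "ldiv a (mirror_prod m (srev f) (srev g))
      = sem (mirror_prod m) (pval (srev f) (ldiv a (srev f)) (srev g) (ldiv a (srev g))) P
    \<longleftrightarrow> rdiv a (m f g) = sem m (pval f (rdiv a f) g (rdiv a g)) P" for a f g
    by (simp add: mirror_prod_def ldiv_srev sem_mirror_prod srev_inject flip: srev_pval)
  then have "(\<forall>a f g. ldiv a (mirror_prod m f g) = sem (mirror_prod m) (pval f (ldiv a f) g (ldiv a g)) P)
      \<longleftrightarrow> (\<forall>f g b. rdiv b (m f g) = sem m (pval f (rdiv b f) g (rdiv b g)) P)"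
    by (metis srev_srev)
  ultimately show ?thesis
    unfolding is_Pprod_def by blast
qed

theorem mainTheorem15:
  fixes P :: "pvar trm"
  shows "(\<forall>f g :: ('a::finite) series. srev (Pprod P f g) = Pprod P (srev f) (srev g))
     \<longleftrightarrow> (\<forall>(f :: 'a series) g b. rdiv b (Pprod P f g)
            = sem (Pprod P) (pval f (rdiv b f) g (rdiv b g)) P)"
proof -
  have "(\<forall>f g :: 'a series. srev (Pprod P f g) = Pprod P (srev f) (srev g))
      \<longleftrightarrow> mirror_prod (Pprod P) = (Pprod P :: 'a series \<Rightarrow> _)"
    by (rule mirror_prod_eq_iff[symmetric])
  also have "\<dots> \<longleftrightarrow> is_Pprod P (mirror_prod (Pprod P :: 'a series \<Rightarrow> _))"
    using is_Pprod_Pprod[of P] by (auto dest: Pprod_eqI)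
  also have "\<dots> \<longleftrightarrow> (\<forall>(f :: 'a series) g b. rdiv b (Pprod P f g)
            = sem (Pprod P) (pval f (rdiv b f) g (rdiv b g)) P)"
    by (simp add: is_Pprod_mirror_prod_iff Pprod_Nil)
  finally show ?thesis .
qed

end
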